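(* Let $S=(d,N_1,\dots,N_L)$ be a neural network architecture, set $N_0=d$, let $\Omega\subset\mathbb{R}^d$, and let $\varrho:\mathbb{R}\to\mathbb{R}$ be locally Lipschitz continuous. Then $\mathcal{RNN}_\varrho^\Omega(S)$ contains at most $\sum_{\ell=1}^L(N_{\ell-1}+1)N_\ell$ linearly independent centers.
   Context: A neural network with architecture $S=(N_0,\dots,N_L)$ is a family $\Phi=((A_\ell,b_\ell))_{\ell=1}^L$, $A_\ell\in\mathbb{R}^{N_\ell\times N_{\ell-1}}$, $b_\ell\in\mathbb{R}^{N_\ell}$; $\mathcal{NN}(S)$ is the set of these. $\mathrm{R}_\varrho^\Omega(\Phi):\Omega\to\mathbb{R}^{N_L}$, $x\mapsto x_L$, where $x_0=x$, $x_\ell=\varrho(A_\ell x_{\ell-1}+b_\ell)$ for $1\le\ell\le L-1$ (componentwise), $x_L=A_Lx_{L-1}+b_L$; $\mathcal{RNN}_\varrho^\Omega(S)=\{\mathrm{R}_\varrho^\Omega(\Phi):\Phi\in\mathcal{NN}(S)\}$. An element $f$ of a subset $A$ of a vector space is a center of $A$ if $\lambda f+(1-\lambda)g\in A$ for all $g\in A$ and all $\lambda\in[0,1]$. *)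

theory Defs
  imports "HOL-Analysis.Analysis"
begin

(* Vectors in R^n are represented as  nat \<Rightarrow> real  with all components of index \<ge> n equal to 0.
   A layer l (1 \<le> l \<le> L) of a network \<Phi> is  \<Phi> l = (A_l, b_l)  with
   A_l :: nat \<Rightarrow> nat \<Rightarrow> real  (only entries i < N l, j < N (l-1) are used) and
   b_l :: nat \<Rightarrow> real  (only entries i < N l are used). *)

type_synonym network = "nat \<Rightarrow> (nat \<Rightarrow> nat \<Rightarrow> real) \<times> (nat \<Rightarrow> real)"

definition affine_layer :: "(nat \<Rightarrow> nat) \<Rightarrow> network \<Rightarrow> nat \<Rightarrow> (nat \<Rightarrow> real) \<Rightarrow> (nat \<Rightarrow> real)" where
  "affine_layer N \<Phi> l x =
     (\<lambda>i. if i < N l then (\<Sum>j<N (l - 1). fst (\<Phi> l) i j * x j) + snd (\<Phi> l) i else 0)"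

fun hidden :: "(real \<Rightarrow> real) \<Rightarrow> (nat \<Rightarrow> nat) \<Rightarrow> network \<Rightarrow> (nat \<Rightarrow> real) \<Rightarrow> nat \<Rightarrow> (nat \<Rightarrow> real)" where
  "hidden \<rho> N \<Phi> x 0 = x"
| "hidden \<rho> N \<Phi> x (Suc l) =
     (\<lambda>i. if i < N (Suc l) then \<rho> (affine_layer N \<Phi> (Suc l) (hidden \<rho> N \<Phi> x l) i) else 0)"

(* R_\<rho>^\<Omega>(\<Phi>): x \<mapsto> x_L on \<Omega>; extended by 0 outside \<Omega> so that equality of
   realizations is equality of functions on \<Omega>. *)
definition realization :: "(real \<Rightarrow> real) \<Rightarrow> (nat \<Rightarrow> nat) \<Rightarrow> nat \<Rightarrow> (nat \<Rightarrow> real) set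
      \<Rightarrow> network \<Rightarrow> (nat \<Rightarrow> real) \<Rightarrow> (nat \<Rightarrow> real)" where
  "realization \<rho> N L \<Omega> \<Phi> =
     (\<lambda>x. if x \<in> \<Omega> then affine_layer N \<Phi> L (hidden \<rho> N \<Phi> x (L - 1)) else (\<lambda>_. 0))"

definition RNN :: "(real \<Rightarrow> real) \<Rightarrow> (nat \<Rightarrow> nat) \<Rightarrow> nat \<Rightarrow> (nat \<Rightarrow> real) set
      \<Rightarrow> ((nat \<Rightarrow> real) \<Rightarrow> (nat \<Rightarrow> real)) set" where
  "RNN \<rho> N L \<Omega> = {realization \<rho> N L \<Omega> \<Phi> | \<Phi>. True}"

definition is_center :: "('a \<Rightarrow> 'b \<Rightarrow> real) set \<Rightarrow> ('a \<Rightarrow> 'b \<Rightarrow> real) \<Rightarrow> bool" where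
  "is_center A f \<longleftrightarrow> f \<in> A \<and>
     (\<forall>g\<in>A. \<forall>t::real. 0 \<le> t \<and> t \<le> 1 \<longrightarrow> (\<lambda>x i. t * f x i + (1 - t) * g x i) \<in> A)"

definition lin_indep :: "('a \<Rightarrow> 'b \<Rightarrow> real) set \<Rightarrow> bool" where
  "lin_indep C \<longleftrightarrow> (\<forall>c. (\<forall>x i. (\<Sum>f\<in>C. c f * f x i) = 0) \<longrightarrow> (\<forall>f\<in>C. c f = 0))"

definition locally_lipschitz :: "(real \<Rightarrow> real) \<Rightarrow> bool" where
  "locally_lipschitz \<rho> \<longleftrightarrow> (\<forall>x. \<exists>e>0. \<exists>K. K-lipschitz_on (cball x e) \<rho>)"

end

(*
  Suppose C consists of n linearly independent centers, where n exceeds the number P of network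
  parameters. Finitely many weighted point evaluations form functionals dual to C, so the
  coefficients q of a combination \<Sum>f\<in>C. q f * f can be read off from the combination. As the
  elements of C are centers and 0 is a realization, every such combination with q \<ge> 0 and
  \<Sum>f\<in>C. q f \<le> 1 is a realization. Hence the map sending parameters to the dual functionals of
  the realized function covers a cube of dimension n. But since \<rho> is locally Lipschitz, this map is
  Lipschitz on bounded sets of parameters, and a locally Lipschitz image of \<real>^P with P < n is a
  Lebesgue null set in \<real>^n.
*)

theory Submission
  imports Defs
begin

section \<open>Lipschitz dependence on parameters\<close>

definition param_box :: "'p set \<Rightarrow> real \<Rightarrow> ('p \<Rightarrow> real) set" where
  "param_box I R = {\<theta>. \<forall>p\<in>I. \<bar>\<theta> p\<bar> \<le> R}"

definition param_dist :: "'p set \<Rightarrow> ('p \<Rightarrow> real) \<Rightarrow> ('p \<Rightarrow> real) \<Rightarrow> real" where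
  "param_dist I \<theta> \<theta>' = (\<Sum>p\<in>I. \<bar>\<theta> p - \<theta>' p\<bar>)"

text \<open>Boundedness is part of the notion so that it is preserved by products and by composition
  with a locally Lipschitz function.\<close>

definition box_lipschitz :: "'p set \<Rightarrow> (('p \<Rightarrow> real) \<Rightarrow> real) \<Rightarrow> bool" where
  "box_lipschitz I f \<longleftrightarrow> (\<forall>R. \<exists>B K. (\<forall>\<theta>\<in>param_box I R. \<bar>f \<theta>\<bar> \<le> B) \<and>
     (\<forall>\<theta>\<in>param_box I R. \<forall>\<theta>'\<in>param_box I R. \<bar>f \<theta> - f \<theta>'\<bar> \<le> K * param_dist I \<theta> \<theta>'))"

lemma param_dist_nonneg: "0 \<le> param_dist I \<theta> \<theta>'"
  by (simp add: param_dist_def sum_nonneg)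

lemma box_lipschitzE:
  assumes "box_lipschitz I f"
  obtains B K where "\<And>\<theta>. \<theta> \<in> param_box I R \<Longrightarrow> \<bar>f \<theta>\<bar> \<le> B"
    and "\<And>\<theta> \<theta>'. \<theta> \<in> param_box I R \<Longrightarrow> \<theta>' \<in> param_box I R \<Longrightarrow>
           \<bar>f \<theta> - f \<theta>'\<bar> \<le> K * param_dist I \<theta> \<theta>'"
  using assms unfolding box_lipschitz_def by metis

lemma box_lipschitzI:
  assumes "\<And>R. \<exists>B K. (\<forall>\<theta>\<in>param_box I R. \<bar>f \<theta>\<bar> \<le> B) \<and>
     (\<forall>\<theta>\<in>param_box I R. \<forall>\<theta>'\<in>param_box I R. \<bar>f \<theta> - f \<theta>'\<bar> \<le> K * param_dist I \<theta> \<theta>')"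
  shows "box_lipschitz I f"
  using assms unfolding box_lipschitz_def by blast

lemma box_lipschitz_const: "box_lipschitz I (\<lambda>_. c)"
  by (rule box_lipschitzI) (intro exI[of _ "\<bar>c\<bar>"] exI[of _ 0] conjI ballI; simp)

lemma box_lipschitz_coord:
  assumes "finite I" "p \<in> I"
  shows "box_lipschitz I (\<lambda>\<theta>. \<theta> p)"
proof (rule box_lipschitzI)
  fix R
  have "\<bar>\<theta> p - \<theta>' p\<bar> \<le> 1 * param_dist I \<theta> \<theta>'" for \<theta> \<theta>' :: "'a \<Rightarrow> real"
    using assms member_le_sum[of p I "\<lambda>q. \<bar>\<theta> q - \<theta>' q\<bar>"] by (simp add: param_dist_def)
  then show "\<exists>B K. (\<forall>\<theta>\<in>param_box I R. \<bar>\<theta> p\<bar> \<le> B) \<and>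
      (\<forall>\<theta>\<in>param_box I R. \<forall>\<theta>'\<in>param_box I R. \<bar>\<theta> p - \<theta>' p\<bar> \<le> K * param_dist I \<theta> \<theta>')"
    using assms(2) by (intro exI[of _ R] exI[of _ 1] conjI ballI) (auto simp: param_box_def)
qed

lemma box_lipschitz_add:
  assumes "box_lipschitz I f" "box_lipschitz I g"
  shows "box_lipschitz I (\<lambda>\<theta>. f \<theta> + g \<theta>)"
proof (rule box_lipschitzI)
  fix R
  obtain Bf Kf where fB: "\<And>\<theta>. \<theta> \<in> param_box I R \<Longrightarrow> \<bar>f \<theta>\<bar> \<le> Bf"
    and fK: "\<And>\<theta> \<theta>'. \<theta> \<in> param_box I R \<Longrightarrow> \<theta>' \<in> param_box I R \<Longrightarrow>
           \<bar>f \<theta> - f \<theta>'\<bar> \<le> Kf * param_dist I \<theta> \<theta>'"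
    using box_lipschitzE[OF assms(1), of R] by blast
  obtain Bg Kg where gB: "\<And>\<theta>. \<theta> \<in> param_box I R \<Longrightarrow> \<bar>g \<theta>\<bar> \<le> Bg"
    and gK: "\<And>\<theta> \<theta>'. \<theta> \<in> param_box I R \<Longrightarrow> \<theta>' \<in> param_box I R \<Longrightarrow>
           \<bar>g \<theta> - g \<theta>'\<bar> \<le> Kg * param_dist I \<theta> \<theta>'"
    using box_lipschitzE[OF assms(2), of R] by blast
  have "\<bar>f \<theta> + g \<theta>\<bar> \<le> Bf + Bg" if "\<theta> \<in> param_box I R" for \<theta>
    using fB[OF that] gB[OF that] by linarith
  moreover have "\<bar>(f \<theta> + g \<theta>) - (f \<theta>' + g \<theta>')\<bar> \<le> (Kf + Kg) * param_dist I \<theta> \<theta>'"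
    if "\<theta> \<in> param_box I R" "\<theta>' \<in> param_box I R" for \<theta> \<theta>'
    using fK[OF that] gK[OF that] by (simp add: distrib_right)
  ultimately show "\<exists>B K. (\<forall>\<theta>\<in>param_box I R. \<bar>f \<theta> + g \<theta>\<bar> \<le> B) \<and> (\<forall>\<theta>\<in>param_box I R.
      \<forall>\<theta>'\<in>param_box I R. \<bar>(f \<theta> + g \<theta>) - (f \<theta>' + g \<theta>')\<bar> \<le> K * param_dist I \<theta> \<theta>')"
    by blast
qed

lemma box_lipschitz_mult:
  assumes "box_lipschitz I f" "box_lipschitz I g"
  shows "box_lipschitz I (\<lambda>\<theta>. f \<theta> * g \<theta>)"
proof (rule box_lipschitzI)
  fix R
  obtain Bf Kf where fB: "\<And>\<theta>. \<theta> \<in> param_box I R \<Longrightarrow> \<bar>f \<theta>\<bar> \<le> Bf"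
    and fK: "\<And>\<theta> \<theta>'. \<theta> \<in> param_box I R \<Longrightarrow> \<theta>' \<in> param_box I R \<Longrightarrow>
           \<bar>f \<theta> - f \<theta>'\<bar> \<le> Kf * param_dist I \<theta> \<theta>'"
    using box_lipschitzE[OF assms(1), of R] by blast
  obtain Bg Kg where gB: "\<And>\<theta>. \<theta> \<in> param_box I R \<Longrightarrow> \<bar>g \<theta>\<bar> \<le> Bg"
    and gK: "\<And>\<theta> \<theta>'. \<theta> \<in> param_box I R \<Longrightarrow> \<theta>' \<in> param_box I R \<Longrightarrow>
           \<bar>g \<theta> - g \<theta>'\<bar> \<le> Kg * param_dist I \<theta> \<theta>'"
    using box_lipschitzE[OF assms(2), of R] by blast
  have "\<bar>f \<theta> * g \<theta>\<bar> \<le> Bf * Bg" if "\<theta> \<in> param_box I R" for \<theta>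
    unfolding abs_mult using fB[OF that] gB[OF that] by (intro mult_mono) auto
  moreover have "\<bar>f \<theta> * g \<theta> - f \<theta>' * g \<theta>'\<bar> \<le> (Bf * Kg + Bg * Kf) * param_dist I \<theta> \<theta>'"
    if \<theta>: "\<theta> \<in> param_box I R" and \<theta>': "\<theta>' \<in> param_box I R" for \<theta> \<theta>'
  proof -
    have "f \<theta> * g \<theta> - f \<theta>' * g \<theta>' = f \<theta> * (g \<theta> - g \<theta>') + g \<theta>' * (f \<theta> - f \<theta>')"
      by (simp add: algebra_simps)
    then have "\<bar>f \<theta> * g \<theta> - f \<theta>' * g \<theta>'\<bar> \<le> \<bar>f \<theta>\<bar> * \<bar>g \<theta> - g \<theta>'\<bar> + \<bar>g \<theta>'\<bar> * \<bar>f \<theta> - f \<theta>'\<bar>"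
      by (metis abs_mult abs_triangle_ineq)
    also have "\<dots> \<le> Bf * (Kg * param_dist I \<theta> \<theta>') + Bg * (Kf * param_dist I \<theta> \<theta>')"
      using fB[OF \<theta>] gB[OF \<theta>'] fK[OF \<theta> \<theta>'] gK[OF \<theta> \<theta>'] by (intro add_mono mult_mono) auto
    finally show ?thesis
      by (simp add: algebra_simps)
  qed
  ultimately show "\<exists>B K. (\<forall>\<theta>\<in>param_box I R. \<bar>f \<theta> * g \<theta>\<bar> \<le> B) \<and> (\<forall>\<theta>\<in>param_box I R.
      \<forall>\<theta>'\<in>param_box I R. \<bar>f \<theta> * g \<theta> - f \<theta>' * g \<theta>'\<bar> \<le> K * param_dist I \<theta> \<theta>')"
    by blast
qed

lemma box_lipschitz_sum:
  assumes "finite S" "\<And>j. j \<in> S \<Longrightarrow> box_lipschitz I (f j)"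
  shows "box_lipschitz I (\<lambda>\<theta>. \<Sum>j\<in>S. f j \<theta>)"
  using assms by (induction S rule: finite_induct) (auto intro: box_lipschitz_const box_lipschitz_add)

lemma locally_lipschitz_compact:
  assumes "locally_lipschitz \<rho>" "compact X"
  obtains K where "K-lipschitz_on X \<rho>"
proof -
  have "local_lipschitz {0::real} X (\<lambda>_. \<rho>)"
  proof (rule local_lipschitzI)
    fix x assume "x \<in> X"
    obtain e K where "e > 0" "K-lipschitz_on (cball x e) \<rho>"
      using assms(1) unfolding locally_lipschitz_def by blast
    then show "\<exists>u>0. \<exists>K. \<forall>t\<in>cball t u \<inter> {0}. K-lipschitz_on (cball x u \<inter> X) \<rho>" for t :: real
      by (intro exI[of _ e] conjI exI[of _ K]) (auto intro: lipschitz_on_subset)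
  qed
  from local_lipschitz_compact_implies_lipschitz[OF this assms(2) compact_sing continuous_on_const]
  show ?thesis using that by blast
qed

lemma locally_lipschitz_bounded_lipschitz:
  assumes "locally_lipschitz \<rho>"
  obtains K where "0 \<le> K" and "\<And>a b. \<bar>a\<bar> \<le> B \<Longrightarrow> \<bar>b\<bar> \<le> B \<Longrightarrow> \<bar>\<rho> a - \<rho> b\<bar> \<le> K * \<bar>a - b\<bar>"
proof -
  obtain K where K: "K-lipschitz_on {-B..B} \<rho>"
    using locally_lipschitz_compact[OF assms compact_Icc] .
  show ?thesis
  proof (rule that)
    show "0 \<le> K"
      using K by (rule lipschitz_on_nonneg)
    fix a b :: real
    assume "\<bar>a\<bar> \<le> B" "\<bar>b\<bar> \<le> B"
    then have "a \<in> {-B..B}" "b \<in> {-B..B}"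
      by auto
    from lipschitz_onD[OF K this] show "\<bar>\<rho> a - \<rho> b\<bar> \<le> K * \<bar>a - b\<bar>"
      by (simp add: dist_real_def)
  qed
qed

lemma box_lipschitz_compose:
  assumes "locally_lipschitz \<rho>" "box_lipschitz I f"
  shows "box_lipschitz I (\<lambda>\<theta>. \<rho> (f \<theta>))"
proof (rule box_lipschitzI)
  fix R
  obtain B K where B: "\<And>\<theta>. \<theta> \<in> param_box I R \<Longrightarrow> \<bar>f \<theta>\<bar> \<le> B"
    and K: "\<And>\<theta> \<theta>'. \<theta> \<in> param_box I R \<Longrightarrow> \<theta>' \<in> param_box I R \<Longrightarrow>
           \<bar>f \<theta> - f \<theta>'\<bar> \<le> K * param_dist I \<theta> \<theta>'"
    using box_lipschitzE[OF assms(2), of R] by blast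
  obtain K\<rho> where "0 \<le> K\<rho>"
    and \<rho>_dist: "\<And>a b. \<bar>a\<bar> \<le> \<bar>B\<bar> \<Longrightarrow> \<bar>b\<bar> \<le> \<bar>B\<bar> \<Longrightarrow> \<bar>\<rho> a - \<rho> b\<bar> \<le> K\<rho> * \<bar>a - b\<bar>"
    using locally_lipschitz_bounded_lipschitz[OF assms(1)] by blast
  have "\<bar>\<rho> (f \<theta>) - \<rho> (f \<theta>')\<bar> \<le> (K\<rho> * K) * param_dist I \<theta> \<theta>'"
    if \<theta>: "\<theta> \<in> param_box I R" and \<theta>': "\<theta>' \<in> param_box I R" for \<theta> \<theta>'
  proof -
    have "\<bar>\<rho> (f \<theta>) - \<rho> (f \<theta>')\<bar> \<le> K\<rho> * \<bar>f \<theta> - f \<theta>'\<bar>"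
      using \<rho>_dist B[OF \<theta>] B[OF \<theta>'] by force
    also have "\<dots> \<le> K\<rho> * (K * param_dist I \<theta> \<theta>')"
      using K[OF \<theta> \<theta>'] \<open>0 \<le> K\<rho>\<close> by (rule mult_left_mono)
    finally show ?thesis
      by (simp add: mult.assoc)
  qed
  moreover have "\<bar>\<rho> (f \<theta>)\<bar> \<le> \<bar>\<rho> 0\<bar> + K\<rho> * \<bar>B\<bar>" if "\<theta> \<in> param_box I R" for \<theta>
  proof -
    have fB: "\<bar>f \<theta>\<bar> \<le> \<bar>B\<bar>"
      using B[OF that] by linarith
    then have "\<bar>\<rho> (f \<theta>) - \<rho> 0\<bar> \<le> K\<rho> * \<bar>f \<theta>\<bar>"
      using \<rho>_dist[of "f \<theta>" 0] by simp
    also have "\<dots> \<le> K\<rho> * \<bar>B\<bar>"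
      using fB \<open>0 \<le> K\<rho>\<close> by (rule mult_left_mono)
    finally have "\<bar>\<rho> (f \<theta>) - \<rho> 0\<bar> \<le> K\<rho> * \<bar>B\<bar>" .
    then show ?thesis by linarith
  qed
  ultimately show "\<exists>B K. (\<forall>\<theta>\<in>param_box I R. \<bar>\<rho> (f \<theta>)\<bar> \<le> B) \<and> (\<forall>\<theta>\<in>param_box I R.
      \<forall>\<theta>'\<in>param_box I R. \<bar>\<rho> (f \<theta>) - \<rho> (f \<theta>')\<bar> \<le> K * param_dist I \<theta> \<theta>')"
    by blast
qed

section \<open>Networks as functions of their parameters\<close>

definition net :: "(nat \<times> nat \<times> nat option \<Rightarrow> real) \<Rightarrow> network" where
  "net \<theta> = (\<lambda>l. (\<lambda>i j. \<theta> (l, i, Some j), \<lambda>i. \<theta> (l, i, None)))"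

definition params :: "(nat \<Rightarrow> nat) \<Rightarrow> nat \<Rightarrow> (nat \<times> nat \<times> nat option) set" where
  "params N L = (SIGMA l:{1..L}. {..<N l} \<times> insert None (Some ` {..<N (l - 1)}))"

lemma finite_params: "finite (params N L)"
  by (simp add: params_def)

lemma card_params: "card (params N L) = (\<Sum>l=1..L. (N (l - 1) + 1) * N l)"
  by (simp add: params_def card_cartesian_product card_image) (simp add: ac_simps)

lemma surj_net: "surj net"
proof -
  have "\<Phi> = net (\<lambda>(l, i, j). case j of None \<Rightarrow> snd (\<Phi> l) i | Some j \<Rightarrow> fst (\<Phi> l) i j)" for \<Phi>
    by (simp add: net_def)
  then show ?thesis
    unfolding surj_def by blast
qed

lemma affine_layer_box_lipschitz:
  assumes "1 \<le> l" "l \<le> L" and h: "\<And>j. j < N (l - 1) \<Longrightarrow> box_lipschitz (params N L) (\<lambda>\<theta>. h \<theta> j)"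
  shows "box_lipschitz (params N L) (\<lambda>\<theta>. affine_layer N (net \<theta>) l (h \<theta>) i)"
proof (cases "i < N l")
  case True
  have "(l, i, Some j) \<in> params N L" if "j < N (l - 1)" for j
    using assms(1,2) True that by (simp add: params_def)
  moreover have "(l, i, None) \<in> params N L"
    using assms(1,2) True by (simp add: params_def)
  ultimately show ?thesis
    using True h by (auto simp: affine_layer_def net_def finite_params
        intro!: box_lipschitz_add box_lipschitz_sum box_lipschitz_mult box_lipschitz_coord)
next
  case False
  then show ?thesis
    by (simp add: affine_layer_def box_lipschitz_const)
qed

lemma hidden_box_lipschitz:
  assumes "locally_lipschitz \<rho>" "l < L"
  shows "box_lipschitz (params N L) (\<lambda>\<theta>. hidden \<rho> N (net \<theta>) x l i)"
  using assms(2)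
proof (induction l arbitrary: i)
  case 0
  then show ?case by (simp add: box_lipschitz_const)
next
  case (Suc l)
  have "box_lipschitz (params N L) (\<lambda>\<theta>. affine_layer N (net \<theta>) (Suc l) (hidden \<rho> N (net \<theta>) x l) i)"
    using Suc by (intro affine_layer_box_lipschitz) auto
  then show ?case
    by (cases "i < N (Suc l)") (simp_all add: box_lipschitz_compose[OF assms(1)] box_lipschitz_const)
qed

lemma realization_box_lipschitz:
  assumes "locally_lipschitz \<rho>" "1 \<le> L"
  shows "box_lipschitz (params N L) (\<lambda>\<theta>. realization \<rho> N L \<Omega> (net \<theta>) x i)"
proof (cases "x \<in> \<Omega>")
  case True
  have "box_lipschitz (params N L) (\<lambda>\<theta>. affine_layer N (net \<theta>) L (hidden \<rho> N (net \<theta>) x (L - 1)) i)"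
    using assms by (intro affine_layer_box_lipschitz hidden_box_lipschitz) auto
  then show ?thesis
    using True by (simp add: realization_def)
next
  case False
  then show ?thesis
    by (simp add: realization_def box_lipschitz_const)
qed

section \<open>Centers and dual sample functionals\<close>

lemma zero_in_RNN: "(\<lambda>x i. 0) \<in> RNN \<rho> N L \<Omega>"
proof -
  have "(\<lambda>x i. 0) = realization \<rho> N L \<Omega> (\<lambda>l. (\<lambda>i j. 0, \<lambda>i. 0))"
    by (intro ext) (simp add: realization_def affine_layer_def)
  then show ?thesis
    unfolding RNN_def by blast
qed

lemma center_combination_mem:
  assumes "finite C" "(\<lambda>x i. 0) \<in> A" "\<forall>f\<in>C. is_center A f"
    and "\<forall>f\<in>C. 0 \<le> t f" "(\<Sum>f\<in>C. t f) \<le> 1"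
  shows "(\<lambda>x i. \<Sum>f\<in>C. t f * f x i) \<in> A"
  using assms(1,3-5)
proof (induction C arbitrary: t rule: finite_induct)
  case empty
  then show ?case using assms(2) by simp
next
  case (insert F C)
  define s where "s = 1 - t F"
  \<comment> \<open>If \<open>s = 0\<close> then \<open>t' = 0\<close> by division by zero, and indeed \<open>t\<close> vanishes on \<open>C\<close>.\<close>
  define t' where "t' f = t f / s" for f
  have rest: "0 \<le> (\<Sum>f\<in>C. t f)" "(\<Sum>f\<in>C. t f) \<le> s"
    using insert by (simp_all add: sum_nonneg s_def)
  have "t F \<le> 1"
    using rest by (simp add: s_def)
  have scale: "s * t' f = t f" if "f \<in> C" for f
  proof (cases "s = 0")
    case True
    then have "(\<Sum>f\<in>C. t f) = 0"
      using rest by simp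
    then have "t f = 0"
      using insert that by (simp add: sum_nonneg_eq_0_iff)
    then show ?thesis by (simp add: t'_def)
  qed (simp add: t'_def)
  have "(\<Sum>f\<in>C. t' f) \<le> 1"
    using rest by (cases "s = 0") (simp_all add: t'_def sum_divide_distrib[symmetric])
  then have "(\<lambda>x i. \<Sum>f\<in>C. t' f * f x i) \<in> A"
    using insert \<open>t F \<le> 1\<close> by (intro insert.IH) (auto simp: t'_def s_def)
  then have "(\<lambda>x i. t F * F x i + (1 - t F) * (\<Sum>f\<in>C. t' f * f x i)) \<in> A"
    using insert \<open>t F \<le> 1\<close> unfolding is_center_def by auto
  moreover have "(1 - t F) * (\<Sum>f\<in>C. t' f * f x i) = (\<Sum>f\<in>C. t f * f x i)" for x i
    unfolding s_def[symmetric] sum_distrib_left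
    by (intro sum.cong) (simp_all add: scale mult.assoc[symmetric])
  ultimately show ?case
    using insert by simp
qed

definition sample_pairing :: "('a \<times> 'b) set \<Rightarrow> ('a \<times> 'b \<Rightarrow> real) \<Rightarrow> ('a \<Rightarrow> 'b \<Rightarrow> real) \<Rightarrow> real" where
  "sample_pairing S v g = (\<Sum>s\<in>S. v s * g (fst s) (snd s))"

lemma sample_pairing_diff:
  "sample_pairing S (\<lambda>s. u s - v s) g = sample_pairing S u g - sample_pairing S v g"
  by (simp add: sample_pairing_def left_diff_distrib sum_subtractf)

lemma sample_pairing_divide: "sample_pairing S (\<lambda>s. v s / c) g = sample_pairing S v g / c"
  by (simp add: sample_pairing_def sum_divide_distrib)

lemma sample_pairing_scale: "sample_pairing S (\<lambda>s. c * v s) g = c * sample_pairing S v g"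
  by (simp add: sample_pairing_def sum_distrib_left mult.assoc)

lemma sample_pairing_sum:
  "sample_pairing S (\<lambda>s. \<Sum>j\<in>J. c j * v j s) g = (\<Sum>j\<in>J. c j * sample_pairing S (v j) g)"
  unfolding sample_pairing_def
  by (simp add: sum_distrib_left sum_distrib_right mult.assoc sum.swap[of _ S])

lemma sample_pairing_combination:
  "sample_pairing S v (\<lambda>x i. \<Sum>h\<in>C. q h * h x i) = (\<Sum>h\<in>C. q h * sample_pairing S v h)"
  unfolding sample_pairing_def
  by (simp add: sum_distrib_left mult.left_commute sum.swap[of _ S])

lemma sample_pairing_delta:
  assumes "finite S" "z \<in> S"
  shows "sample_pairing S (\<lambda>s. if s = z then 1 else 0) g = g (fst z) (snd z)"
proof -
  have "(\<Sum>s\<in>S. (if s = z then 1 else 0) * g (fst s) (snd s)) = (\<Sum>s\<in>S. if s = z then g (fst s) (snd s) else 0)"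
    by (intro sum.cong) auto
  then show ?thesis
    using assms by (simp add: sample_pairing_def)
qed

lemma sample_pairing_extend:
  assumes "finite S'" "S \<subseteq> S'"
  shows "sample_pairing S' (\<lambda>s. if s \<in> S then v s else 0) g = sample_pairing S v g"
  unfolding sample_pairing_def using assms by (intro sum.mono_neutral_cong_right) auto

lemma lin_indep_subset:
  assumes "lin_indep B" "A \<subseteq> B" "finite B"
  shows "lin_indep A"
  unfolding lin_indep_def
proof (intro allI impI ballI)
  fix c f
  assume comb: "\<forall>x i. (\<Sum>g\<in>A. c g * g x i) = 0" and "f \<in> A"
  define c' where "c' g = (if g \<in> A then c g else 0)" for g
  have "(\<Sum>g\<in>B. c' g * g x i) = (\<Sum>g\<in>A. c g * g x i)" for x i
    unfolding c'_def using assms(2,3) by (intro sum.mono_neutral_cong_right) auto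
  then have "\<forall>g\<in>B. c' g = 0"
    using assms(1) comb unfolding lin_indep_def by simp
  then have "c' f = 0"
    using \<open>f \<in> A\<close> assms(2) by blast
  then show "c f = 0"
    using \<open>f \<in> A\<close> by (simp add: c'_def)
qed

text \<open>The new functional \<open>v\<close> is the evaluation at \<open>z\<close> with its components along the old dual
  functionals removed, normalised by the residual \<open>r\<close>; the old functionals are then corrected by
  multiples of \<open>v\<close>.\<close>

lemma dual_samples_insert:
  fixes C :: "('a \<Rightarrow> 'b \<Rightarrow> real) set" and z :: "'a \<times> 'b"
  assumes "finite C" "finite S" "F \<notin> C"
    and dual: "\<And>f g. f \<in> C \<Longrightarrow> g \<in> C \<Longrightarrow> sample_pairing S (w f) g = (if f = g then 1 else 0)"
    and residual: "F (fst z) (snd z) \<noteq> (\<Sum>f\<in>C. sample_pairing S (w f) F * f (fst z) (snd z))"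
  shows "\<exists>w'. \<forall>f\<in>insert F C. \<forall>g\<in>insert F C.
           sample_pairing (insert z S) (w' f) g = (if f = g then 1 else 0)"
proof -
  define S' where "S' = insert z S"
  define w0 where "w0 f s = (if s \<in> S then w f s else 0)" for f s
  define r where "r = F (fst z) (snd z) - (\<Sum>f\<in>C. sample_pairing S (w f) F * f (fst z) (snd z))"
  define v where "v s = ((if s = z then 1 else 0) - (\<Sum>f\<in>C. f (fst z) (snd z) * w0 f s)) / r" for s
  define w' where "w' f = (if f = F then v else (\<lambda>s. w0 f s - sample_pairing S (w f) F * v s))" for f
  have S': "finite S'" "S \<subseteq> S'" "z \<in> S'"
    using assms(2) by (auto simp: S'_def)
  have "r \<noteq> 0"
    using residual by (simp add: r_def)
  have w0: "sample_pairing S' (w0 f) g = sample_pairing S (w f) g" for f g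
    unfolding w0_def using S'(1,2) by (rule sample_pairing_extend)
  have v: "sample_pairing S' v g =
      (g (fst z) (snd z) - (\<Sum>f\<in>C. f (fst z) (snd z) * sample_pairing S (w f) g)) / r" for g
    unfolding v_def using S'
    by (simp add: sample_pairing_divide sample_pairing_diff sample_pairing_sum sample_pairing_delta w0)
  have vC: "sample_pairing S' v g = 0" if "g \<in> C" for g
  proof -
    have "(\<Sum>f\<in>C. f (fst z) (snd z) * sample_pairing S (w f) g) = (\<Sum>f\<in>C. if f = g then g (fst z) (snd z) else 0)"
      using dual that by (intro sum.cong) auto
    then show ?thesis
      using assms(1) that by (simp add: v)
  qed
  have vF: "sample_pairing S' v F = 1"
    using \<open>r \<noteq> 0\<close> by (simp add: v r_def mult.commute)
  have "sample_pairing S' (w' f) g = (if f = g then 1 else 0)" if "f \<in> insert F C" "g \<in> insert F C" for f g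
    using that assms(3) vC vF dual
    by (auto simp: w'_def sample_pairing_diff sample_pairing_scale w0)
  then show ?thesis
    unfolding S'_def by blast
qed

lemma lin_indep_dual_samples:
  fixes C :: "('a \<Rightarrow> 'b \<Rightarrow> real) set"
  assumes "finite C" "lin_indep C"
  shows "\<exists>S w. finite S \<and> (\<forall>f\<in>C. \<forall>g\<in>C. sample_pairing S (w f) g = (if f = g then 1 else 0))"
  using assms
proof (induction C rule: finite_induct)
  case empty
  then show ?case by blast
next
  case (insert F C)
  then obtain S w where S: "finite S"
    and dual: "\<forall>f\<in>C. \<forall>g\<in>C. sample_pairing S (w f) g = (if f = g then 1 else 0)"
    using lin_indep_subset[of "insert F C" C] by blast
  define a where "a f = sample_pairing S (w f) F" for f
  have "\<exists>x i. F x i \<noteq> (\<Sum>f\<in>C. a f * f x i)"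
  proof (rule ccontr)
    assume no_witness: "\<not> ?thesis"
    define c where "c f = (if f = F then 1 else - a f)" for f
    have "(\<Sum>f\<in>insert F C. c f * f x i) = F x i - (\<Sum>f\<in>C. a f * f x i)" for x i
    proof -
      have "(\<Sum>f\<in>C. c f * f x i) = (\<Sum>f\<in>C. - (a f * f x i))"
        using insert(2) by (intro sum.cong) (auto simp: c_def)
      then show ?thesis
        using insert(1,2) by (simp add: c_def sum_negf)
    qed
    then have "c F = 0"
      using insert(4) no_witness unfolding lin_indep_def by simp
    then show False
      by (simp add: c_def)
  qed
  then obtain z where z: "F (fst z) (snd z) \<noteq> (\<Sum>f\<in>C. a f * f (fst z) (snd z))"
    by auto
  have "\<exists>w'. \<forall>f\<in>insert F C. \<forall>g\<in>insert F C.
      sample_pairing (insert z S) (w' f) g = (if f = g then 1 else 0)"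
    by (rule dual_samples_insert[OF insert(1) S insert(2)]) (use dual z in \<open>auto simp: a_def\<close>)
  then show ?case
    using S by blast
qed

lemma sample_pairing_realization_box_lipschitz:
  assumes "finite S" "locally_lipschitz \<rho>" "1 \<le> L"
  shows "box_lipschitz (params N L) (\<lambda>\<theta>. sample_pairing S v (realization \<rho> N L \<Omega> (net \<theta>)))"
  unfolding sample_pairing_def using assms
  by (auto intro!: box_lipschitz_sum box_lipschitz_mult box_lipschitz_const realization_box_lipschitz)

lemma sample_pairing_dual_combination:
  assumes "finite C" "f \<in> C"
    and "\<forall>f\<in>C. \<forall>g\<in>C. sample_pairing S (w f) g = (if f = g then 1 else 0)"
  shows "sample_pairing S (w f) (\<lambda>x i. \<Sum>g\<in>C. q g * g x i) = q f"
proof -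
  have "(\<Sum>g\<in>C. q g * sample_pairing S (w f) g) = (\<Sum>g\<in>C. if f = g then q g else 0)"
    using assms(2,3) by (intro sum.cong) auto
  then show ?thesis
    using assms(1,2) by (simp add: sample_pairing_combination)
qed

lemma center_combination_realization:
  assumes "finite C" "\<forall>f\<in>C. is_center (RNN \<rho> N L \<Omega>) f"
    and "\<forall>f\<in>C. 0 \<le> q f" "(\<Sum>f\<in>C. q f) \<le> 1"
  obtains \<theta> where "realization \<rho> N L \<Omega> (net \<theta>) = (\<lambda>x i. \<Sum>f\<in>C. q f * f x i)"
proof -
  have "(\<lambda>x i. \<Sum>f\<in>C. q f * f x i) \<in> RNN \<rho> N L \<Omega>"
    using center_combination_mem[OF assms(1) zero_in_RNN assms(2-4)] .
  then obtain \<Phi> where "realization \<rho> N L \<Omega> \<Phi> = (\<lambda>x i. \<Sum>f\<in>C. q f * f x i)"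
    unfolding RNN_def by auto
  moreover obtain \<theta> where "\<Phi> = net \<theta>"
    using surj_net by (rule surjE)
  ultimately show ?thesis
    using that by blast
qed

lemma realizations_cover_dual_cube:
  assumes "finite C" "\<forall>f\<in>C. is_center (RNN \<rho> N L \<Omega>) f" "0 < card C"
    and dual: "\<forall>f\<in>C. \<forall>g\<in>C. sample_pairing S (w f) g = (if f = g then 1 else 0)"
  shows "PiE C (\<lambda>_. {0..1 / card C}) \<subseteq>
           range (\<lambda>\<theta>. restrict (\<lambda>f. sample_pairing S (w f) (realization \<rho> N L \<Omega> (net \<theta>))) C)"
proof
  fix q assume q: "q \<in> PiE C (\<lambda>_. {0..1 / card C})"
  then have "\<forall>f\<in>C. 0 \<le> q f"
    by auto
  moreover have "(\<Sum>f\<in>C. q f) \<le> card C * (1 / card C)"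
    using q by (intro sum_bounded_above) auto
  then have "(\<Sum>f\<in>C. q f) \<le> 1"
    using assms(3) by simp
  ultimately obtain \<theta> where \<theta>: "realization \<rho> N L \<Omega> (net \<theta>) = (\<lambda>x i. \<Sum>f\<in>C. q f * f x i)"
    by (rule center_combination_realization[OF assms(1,2)])
  have "restrict (\<lambda>f. sample_pairing S (w f) (realization \<rho> N L \<Omega> (net \<theta>))) C = restrict q C"
    using sample_pairing_dual_combination[OF assms(1) _ dual] by (intro restrict_ext) (simp add: \<theta>)
  then have "q = restrict (\<lambda>f. sample_pairing S (w f) (realization \<rho> N L \<Omega> (net \<theta>))) C"
    using PiE_restrict[OF q] by simp
  then show "q \<in> range (\<lambda>\<theta>. restrict (\<lambda>f. sample_pairing S (w f) (realization \<rho> N L \<Omega> (net \<theta>))) C)"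
    by blast
qed

section \<open>Lipschitz images of lower-dimensional parameter boxes are null\<close>

definition grid_center :: "real \<Rightarrow> nat \<Rightarrow> nat \<Rightarrow> real" where
  "grid_center R m g = - R + (2 * real g + 1) * R / real m"

lemma grid_center_near:
  assumes "0 < R" "0 < m" "\<bar>x\<bar> \<le> R"
  shows "\<exists>g<m. \<bar>x - grid_center R m g\<bar> \<le> R / m"
proof -
  define u where "u = (x + R) * m / (2 * R)"
  have "0 \<le> u"
    using assms by (simp add: u_def)
  have "u \<le> m"
    using assms by (simp add: u_def field_simps)
  define g where "g = min (m - 1) (nat \<lfloor>u\<rfloor>)"
  have "g < m"
    using assms(2) by (simp add: g_def)
  have "real g \<le> u" "u \<le> real g + 1"
    using \<open>0 \<le> u\<close> \<open>u \<le> m\<close> assms(2) by (auto simp: g_def min_def of_nat_diff) linarith+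
  then have "\<bar>2 * u - 2 * real g - 1\<bar> * (R / m) \<le> 1 * (R / m)"
    using assms by (intro mult_right_mono) auto
  moreover have "x - grid_center R m g = (2 * u - 2 * real g - 1) * (R / m)"
    using assms by (simp add: u_def grid_center_def field_simps)
  then have "\<bar>x - grid_center R m g\<bar> = \<bar>2 * u - 2 * real g - 1\<bar> * (R / m)"
    using assms by (simp only: abs_mult) simp
  ultimately show ?thesis
    using \<open>g < m\<close> by auto
qed

lemma abs_grid_center_le:
  assumes "0 \<le> R" "g < m"
  shows "\<bar>grid_center R m g\<bar> \<le> R"
proof -
  have "(2 * real g + 1) * R \<le> 2 * real m * R"
    using assms by (intro mult_right_mono) auto
  then have "(2 * real g + 1) * R / real m \<le> 2 * R"
    using assms by (simp add: field_simps)
  moreover have "0 \<le> (2 * real g + 1) * R / real m"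
    using assms by simp
  ultimately show ?thesis
    by (simp add: grid_center_def abs_le_iff)
qed

definition param_grid :: "'p set \<Rightarrow> real \<Rightarrow> nat \<Rightarrow> ('p \<Rightarrow> real) set" where
  "param_grid I R m = (\<lambda>g p. grid_center R m (g p)) ` PiE I (\<lambda>_. {..<m})"

lemma finite_param_grid: "finite I \<Longrightarrow> finite (param_grid I R m)"
  by (simp add: param_grid_def finite_PiE)

lemma card_param_grid_le: "finite I \<Longrightarrow> card (param_grid I R m) \<le> m ^ card I"
  unfolding param_grid_def using card_image_le[of "PiE I (\<lambda>_. {..<m})"]
  by (simp add: card_PiE finite_PiE)

lemma param_box_grid_cover:
  assumes "finite I" "0 < R" "0 < m" "\<theta> \<in> param_box I R"
  obtains \<eta> where "\<eta> \<in> param_grid I R m"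
    and "\<eta> \<in> param_box I R" and "param_dist I \<theta> \<eta> \<le> card I * (R / m)"
proof -
  have "\<forall>p\<in>I. \<exists>g<m. \<bar>\<theta> p - grid_center R m g\<bar> \<le> R / m"
    using assms grid_center_near by (auto simp: param_box_def)
  then obtain g where g: "\<forall>p\<in>I. g p < m \<and> \<bar>\<theta> p - grid_center R m (g p)\<bar> \<le> R / m"
    by metis
  define \<eta> where "\<eta> p = grid_center R m (restrict g I p)" for p
  have "\<eta> \<in> param_grid I R m"
    using g unfolding \<eta>_def param_grid_def by (intro imageI) auto
  moreover have "\<eta> \<in> param_box I R"
    using g assms(2) by (auto simp: \<eta>_def param_box_def intro: abs_grid_center_le)
  moreover have "param_dist I \<theta> \<eta> \<le> card I * (R / m)"
    unfolding param_dist_def using g by (intro sum_bounded_above) (simp add: \<eta>_def)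
  ultimately show ?thesis
    using that by blast
qed

lemma emeasure_PiM_lborel_box:
  assumes "finite J" "\<And>k. k \<in> J \<Longrightarrow> a k \<le> b k"
  shows "emeasure (PiM J (\<lambda>_. lborel)) (PiE J (\<lambda>k. {a k..b k})) = ennreal (\<Prod>k\<in>J. b k - a k)"
proof -
  interpret product_sigma_finite "\<lambda>_::'a. lborel :: real measure"
    by standard
  show ?thesis
    using assms by (simp add: emeasure_PiM prod_ennreal)
qed

lemma power_over_power_le:
  fixes x c :: real
  assumes "d < n" "0 \<le> c" "1 \<le> x"
  shows "x ^ d * (c / x) ^ n \<le> c ^ n / x"
proof -
  have "x ^ d * x \<le> x ^ n"
    using assms power_increasing[of "Suc d" n x] by (simp add: mult.commute)
  then have "c ^ n * (x ^ d * x) \<le> c ^ n * x ^ n"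
    using assms by (simp add: mult_left_mono)
  then show ?thesis
    using assms by (simp add: field_simps power_divide)
qed

lemma emeasure_small_cube_union_le:
  fixes G :: "('j \<Rightarrow> real) set"
  assumes "finite J" "d < card J" "0 \<le> s" "finite G" "card G \<le> m ^ d" "0 < m"
  shows "emeasure (PiM J (\<lambda>_. lborel)) (\<Union>c\<in>G. PiE J (\<lambda>k. {c k - s / m .. c k + s / m}))
           \<le> ennreal ((2 * s) ^ card J / m)"
proof -
  let ?M = "PiM J (\<lambda>_. lborel :: real measure)"
  let ?n = "card J"
  define cube where "cube c = PiE J (\<lambda>k. {c k - s / m .. c k + s / m})" for c :: "'j \<Rightarrow> real"
  have "emeasure ?M (cube c) = ennreal ((2 * s / m) ^ ?n)" for c
    unfolding cube_def using assms(1,3) by (simp add: emeasure_PiM_lborel_box)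
  moreover have "emeasure ?M (\<Union>c\<in>G. cube c) \<le> (\<Sum>c\<in>G. emeasure ?M (cube c))"
    unfolding cube_def using assms(1,4) by (intro emeasure_subadditive_finite) (auto intro: sets_PiM_I_finite)
  ultimately have "emeasure ?M (\<Union>c\<in>G. cube c) \<le> (\<Sum>c\<in>G. ennreal ((2 * s / m) ^ ?n))"
    by simp
  also have "\<dots> = ennreal (card G * (2 * s / m) ^ ?n)"
    using assms(3) by (subst sum_ennreal) auto
  also have "\<dots> \<le> ennreal (m ^ d * (2 * s / m) ^ ?n)"
  proof -
    have "real (card G) \<le> real m ^ d"
      using assms(5) by (simp only: of_nat_power[symmetric] of_nat_le_iff)
    then show ?thesis
      using assms(3) by (intro ennreal_leI mult_right_mono) simp_all
  qed
  also have "\<dots> \<le> ennreal ((2 * s) ^ ?n / m)"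
    using power_over_power_le[OF assms(2), of "2 * s" m] assms(3,6) by (intro ennreal_leI) simp
  finally show ?thesis
    unfolding cube_def .
qed

lemma null_if_small_cube_covers:
  fixes A :: "('j \<Rightarrow> real) set"
  assumes "finite J" "d < card J" "0 \<le> s"
    and cover: "\<And>m. 0 < m \<Longrightarrow> \<exists>G. finite G \<and> card G \<le> m ^ d \<and>
                  A \<subseteq> (\<Union>c\<in>G. PiE J (\<lambda>k. {c k - s / m .. c k + s / m}))"
  shows "\<exists>Z\<in>null_sets (PiM J (\<lambda>_. lborel)). A \<subseteq> Z"
proof -
  let ?M = "PiM J (\<lambda>_. lborel :: real measure)"
  let ?n = "card J"
  define U where "U m G = (\<Union>c\<in>G. PiE J (\<lambda>k. {c k - s / m .. c k + s / m}))"
    for m :: nat and G :: "('j \<Rightarrow> real) set"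
  have "\<forall>m. \<exists>G. finite G \<and> card G \<le> Suc m ^ d \<and> A \<subseteq> U (Suc m) G"
  proof
    fix m
    show "\<exists>G. finite G \<and> card G \<le> Suc m ^ d \<and> A \<subseteq> U (Suc m) G"
      using cover[of "Suc m"] unfolding U_def by simp
  qed
  from choice[OF this] obtain G
    where G: "\<forall>m. finite (G m) \<and> card (G m) \<le> Suc m ^ d \<and> A \<subseteq> U (Suc m) (G m)"
    by blast
  have U_sets: "U (Suc m) (G m) \<in> sets ?M" for m
    unfolding U_def using G assms(1) by (intro sets.finite_UN sets_PiM_I_finite) auto
  have Z_sets: "(\<Inter>m. U (Suc m) (G m)) \<in> sets ?M"
    using U_sets by (intro sets.countable_INT) auto
  have Z_meas: "emeasure ?M (\<Inter>m. U (Suc m) (G m)) \<le> ennreal ((2 * s) ^ ?n / Suc m)" for m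
  proof -
    have "emeasure ?M (\<Inter>m. U (Suc m) (G m)) \<le> emeasure ?M (U (Suc m) (G m))"
      using U_sets by (intro emeasure_mono) auto
    also have "\<dots> \<le> ennreal ((2 * s) ^ ?n / Suc m)"
      unfolding U_def using G assms(1-3) by (intro emeasure_small_cube_union_le) auto
    finally show ?thesis .
  qed
  have lim: "((\<lambda>m. ennreal ((2 * s) ^ ?n / Suc m)) \<longlongrightarrow> 0) sequentially"
    using tendsto_ennrealI[OF LIMSEQ_Suc[OF lim_const_over_n[of "(2 * s) ^ ?n"]]] by simp
  have "emeasure ?M (\<Inter>m. U (Suc m) (G m)) \<le> 0"
    by (rule tendsto_le[OF trivial_limit_sequentially lim tendsto_const]) (simp only: Z_meas eventually_True)
  then have "(\<Inter>m. U (Suc m) (G m)) \<in> null_sets ?M"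
    using Z_sets by (intro null_setsI) simp_all
  moreover have "A \<subseteq> (\<Inter>m. U (Suc m) (G m))"
    using G by auto
  ultimately show ?thesis
    by blast
qed

lemma box_lipschitz_uniform:
  assumes "finite J" "\<forall>k\<in>J. box_lipschitz I (\<lambda>\<theta>. \<psi> \<theta> k)"
  shows "\<exists>K\<ge>0. \<forall>k\<in>J. \<forall>\<theta>\<in>param_box I R. \<forall>\<theta>'\<in>param_box I R.
           \<bar>\<psi> \<theta> k - \<psi> \<theta>' k\<bar> \<le> K * param_dist I \<theta> \<theta>'"
proof -
  have "\<forall>k\<in>J. \<exists>K. \<forall>\<theta>\<in>param_box I R. \<forall>\<theta>'\<in>param_box I R. \<bar>\<psi> \<theta> k - \<psi> \<theta>' k\<bar> \<le> K * param_dist I \<theta> \<theta>'"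
    using assms(2) unfolding box_lipschitz_def by blast
  from bchoice[OF this] obtain K where K: "\<forall>k\<in>J. \<forall>\<theta>\<in>param_box I R. \<forall>\<theta>'\<in>param_box I R.
      \<bar>\<psi> \<theta> k - \<psi> \<theta>' k\<bar> \<le> K k * param_dist I \<theta> \<theta>'"
    by blast
  have "\<bar>\<psi> \<theta> k - \<psi> \<theta>' k\<bar> \<le> (\<Sum>j\<in>J. \<bar>K j\<bar>) * param_dist I \<theta> \<theta>'"
    if "k \<in> J" "\<theta> \<in> param_box I R" "\<theta>' \<in> param_box I R" for k \<theta> \<theta>'
  proof -
    have "\<bar>\<psi> \<theta> k - \<psi> \<theta>' k\<bar> \<le> K k * param_dist I \<theta> \<theta>'"
      using K that by blast
    also have "\<dots> \<le> (\<Sum>j\<in>J. \<bar>K j\<bar>) * param_dist I \<theta> \<theta>'"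
    proof (rule mult_right_mono)
      show "K k \<le> (\<Sum>j\<in>J. \<bar>K j\<bar>)"
        using assms(1) that(1) member_le_sum[of k J "\<lambda>j. \<bar>K j\<bar>"] by simp
    qed (rule param_dist_nonneg)
    finally show ?thesis .
  qed
  moreover have "0 \<le> (\<Sum>j\<in>J. \<bar>K j\<bar>)"
    by (simp add: sum_nonneg)
  ultimately show ?thesis
    by blast
qed

lemma lipschitz_image_grid_cover:
  fixes \<psi> :: "('p \<Rightarrow> real) \<Rightarrow> 'j \<Rightarrow> real" and K R :: real and m :: nat
  assumes "finite I" "0 < R" "0 < m" "0 \<le> K"
    and K: "\<forall>k\<in>J. \<forall>\<theta>\<in>param_box I R. \<forall>\<theta>'\<in>param_box I R.
              \<bar>\<psi> \<theta> k - \<psi> \<theta>' k\<bar> \<le> K * param_dist I \<theta> \<theta>'"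
  defines "s \<equiv> K * card I * R"
  shows "(\<lambda>\<theta>. restrict (\<psi> \<theta>) J) ` param_box I R \<subseteq>
           (\<Union>c\<in>(\<lambda>\<eta>. restrict (\<psi> \<eta>) J) ` param_grid I R m. PiE J (\<lambda>k. {c k - s / m .. c k + s / m}))"
proof clarify
  fix \<theta> assume "\<theta> \<in> param_box I R"
  then obtain \<eta> where "\<eta> \<in> param_grid I R m" "\<eta> \<in> param_box I R"
    and d: "param_dist I \<theta> \<eta> \<le> card I * (R / m)"
    using param_box_grid_cover[OF assms(1-3)] by blast
  have "\<psi> \<theta> k \<in> {\<psi> \<eta> k - s / m .. \<psi> \<eta> k + s / m}" if "k \<in> J" for k
  proof -
    have "\<bar>\<psi> \<theta> k - \<psi> \<eta> k\<bar> \<le> K * param_dist I \<theta> \<eta>"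
      using K that \<open>\<theta> \<in> param_box I R\<close> \<open>\<eta> \<in> param_box I R\<close> by blast
    also have "\<dots> \<le> K * (card I * (R / m))"
      using d \<open>0 \<le> K\<close> by (rule mult_left_mono)
    finally show ?thesis
      by (simp add: s_def abs_le_iff)
  qed
  then have "restrict (\<psi> \<theta>) J \<in> PiE J (\<lambda>k. {restrict (\<psi> \<eta>) J k - s / m .. restrict (\<psi> \<eta>) J k + s / m})"
    by simp
  then show "restrict (\<psi> \<theta>) J \<in>
      (\<Union>c\<in>(\<lambda>\<eta>. restrict (\<psi> \<eta>) J) ` param_grid I R m. PiE J (\<lambda>k. {c k - s / m .. c k + s / m}))"
    using \<open>\<eta> \<in> param_grid I R m\<close> by blast
qed

lemma box_lipschitz_image_box_null:
  fixes \<psi> :: "('p \<Rightarrow> real) \<Rightarrow> 'j \<Rightarrow> real"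
  assumes "finite I" "finite J" "card I < card J" "0 < R"
    and "\<forall>k\<in>J. box_lipschitz I (\<lambda>\<theta>. \<psi> \<theta> k)"
  shows "\<exists>Z\<in>null_sets (PiM J (\<lambda>_. lborel)). (\<lambda>\<theta>. restrict (\<psi> \<theta>) J) ` param_box I R \<subseteq> Z"
proof -
  obtain K where "0 \<le> K" and K: "\<forall>k\<in>J. \<forall>\<theta>\<in>param_box I R. \<forall>\<theta>'\<in>param_box I R.
      \<bar>\<psi> \<theta> k - \<psi> \<theta>' k\<bar> \<le> K * param_dist I \<theta> \<theta>'"
    using box_lipschitz_uniform[OF assms(2,5)] by blast
  show ?thesis
  proof (rule null_if_small_cube_covers[OF assms(2,3)])
    show "0 \<le> K * card I * R"
      using \<open>0 \<le> K\<close> assms(4) by simp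
    fix m :: nat
    assume "0 < m"
    let ?G = "(\<lambda>\<eta>. restrict (\<psi> \<eta>) J) ` param_grid I R m"
    have "card ?G \<le> m ^ card I"
      using card_image_le[OF finite_param_grid[OF assms(1)]] card_param_grid_le[OF assms(1)]
      by (rule le_trans)
    then show "\<exists>G. finite G \<and> card G \<le> m ^ card I \<and> (\<lambda>\<theta>. restrict (\<psi> \<theta>) J) ` param_box I R \<subseteq>
        (\<Union>c\<in>G. PiE J (\<lambda>k. {c k - K * card I * R / m .. c k + K * card I * R / m}))"
      using lipschitz_image_grid_cover[OF assms(1,4) \<open>0 < m\<close> \<open>0 \<le> K\<close> K]
      by (intro exI[of _ ?G] conjI finite_imageI finite_param_grid assms(1))
  qed
qed

lemma box_lipschitz_image_null:
  fixes \<psi> :: "('p \<Rightarrow> real) \<Rightarrow> 'j \<Rightarrow> real"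
  assumes "finite I" "finite J" "card I < card J"
    and "\<forall>k\<in>J. box_lipschitz I (\<lambda>\<theta>. \<psi> \<theta> k)"
  shows "\<exists>Z\<in>null_sets (PiM J (\<lambda>_. lborel)). range (\<lambda>\<theta>. restrict (\<psi> \<theta>) J) \<subseteq> Z"
proof -
  have "\<forall>r::nat. \<exists>Z. Z \<in> null_sets (PiM J (\<lambda>_. lborel)) \<and>
      (\<lambda>\<theta>. restrict (\<psi> \<theta>) J) ` param_box I (Suc r) \<subseteq> Z"
    using box_lipschitz_image_box_null[OF assms(1-3) _ assms(4)] by (simp add: Bex_def)
  from choice[OF this] obtain Z where Z: "\<forall>r. Z r \<in> null_sets (PiM J (\<lambda>_. lborel)) \<and>
      (\<lambda>\<theta>. restrict (\<psi> \<theta>) J) ` param_box I (Suc r) \<subseteq> Z r"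
    by blast
  have "\<theta> \<in> (\<Union>r. param_box I (Suc r))" for \<theta>
  proof -
    obtain r :: nat where r: "(\<Sum>p\<in>I. \<bar>\<theta> p\<bar>) \<le> r"
      using real_arch_simple by blast
    have "\<bar>\<theta> p\<bar> \<le> Suc r" if "p \<in> I" for p
      using member_le_sum[of p I "\<lambda>p. \<bar>\<theta> p\<bar>"] assms(1) that r by simp
    then show ?thesis
      by (auto simp: param_box_def)
  qed
  then have "range (\<lambda>\<theta>. restrict (\<psi> \<theta>) J) \<subseteq> (\<Union>r. Z r)"
    using Z by blast
  moreover have "(\<Union>r. Z r) \<in> null_sets (PiM J (\<lambda>_. lborel))"
    using Z by blast
  ultimately show ?thesis
    by blast
qed

lemma box_lipschitz_image_not_cube:
  fixes \<psi> :: "('p \<Rightarrow> real) \<Rightarrow> 'j \<Rightarrow> real"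
  assumes "finite I" "finite J" "card I < card J" "0 < a"
    and "\<forall>k\<in>J. box_lipschitz I (\<lambda>\<theta>. \<psi> \<theta> k)"
  shows "\<not> PiE J (\<lambda>_. {0..a}) \<subseteq> range (\<lambda>\<theta>. restrict (\<psi> \<theta>) J)"
proof
  let ?M = "PiM J (\<lambda>_. lborel :: real measure)"
  assume cube: "PiE J (\<lambda>_. {0..a}) \<subseteq> range (\<lambda>\<theta>. restrict (\<psi> \<theta>) J)"
  obtain Z where Z: "Z \<in> null_sets ?M" "range (\<lambda>\<theta>. restrict (\<psi> \<theta>) J) \<subseteq> Z"
    using box_lipschitz_image_null[OF assms(1-3,5)] by blast
  have "PiE J (\<lambda>_. {0..a}) \<in> sets ?M"
    using assms(2) by (intro sets_PiM_I_finite) auto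
  moreover have "PiE J (\<lambda>_. {0..a}) \<subseteq> Z"
    using cube Z(2) by (rule order_trans)
  ultimately have "PiE J (\<lambda>_. {0..a}) \<in> null_sets ?M"
    by (rule null_sets_subset[OF Z(1)])
  then have "emeasure ?M (PiE J (\<lambda>_. {0..a})) = 0"
    by (rule null_setsD1)
  moreover have "emeasure ?M (PiE J (\<lambda>_. {0..a})) = ennreal (a ^ card J)"
    using emeasure_PiM_lborel_box[OF assms(2), of "\<lambda>_. 0" "\<lambda>_. a"] assms(4) by simp
  ultimately show False
    using assms(4) by simp
qed

theorem propositionC4:
  fixes \<rho> :: "real \<Rightarrow> real" and N :: "nat \<Rightarrow> nat" and L d :: nat
    and \<Omega> :: "(nat \<Rightarrow> real) set" and C :: "((nat \<Rightarrow> real) \<Rightarrow> (nat \<Rightarrow> real)) set"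
  assumes "1 \<le> L" and "N 0 = d"
    and "\<Omega> \<subseteq> {x. \<forall>i\<ge>d. x i = 0}"
    and "locally_lipschitz \<rho>"
    and "finite C" and "\<forall>f\<in>C. is_center (RNN \<rho> N L \<Omega>) f" and "lin_indep C"
  shows "card C \<le> (\<Sum>l=1..L. (N (l - 1) + 1) * N l)"
proof (rule ccontr)
  assume "\<not> ?thesis"
  then have fewer_params: "card (params N L) < card C"
    by (simp add: card_params)
  then have "0 < card C"
    by simp
  obtain S w where "finite S" and dual: "\<forall>f\<in>C. \<forall>g\<in>C. sample_pairing S (w f) g = (if f = g then 1 else 0)"
    using lin_indep_dual_samples[OF assms(5,7)] by blast
  let ?\<psi> = "\<lambda>\<theta> f. sample_pairing S (w f) (realization \<rho> N L \<Omega> (net \<theta>))"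
  have "\<forall>f\<in>C. box_lipschitz (params N L) (\<lambda>\<theta>. ?\<psi> \<theta> f)"
    using sample_pairing_realization_box_lipschitz[OF \<open>finite S\<close> assms(4,1)] by simp
  moreover have "PiE C (\<lambda>_. {0..1 / card C}) \<subseteq> range (\<lambda>\<theta>. restrict (?\<psi> \<theta>) C)"
    using realizations_cover_dual_cube[OF assms(5,6) \<open>0 < card C\<close> dual] .
  ultimately show False
    using box_lipschitz_image_not_cube[OF finite_params assms(5) fewer_params, of "1 / card C"] \<open>0 < card C\<close>
    by simp
qed

end
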